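(* Let $r\in\mathbb R\setminus\{0\}$, let $\varphi_0,\varphi_1,\varphi$ be positive non-degenerate quasi-concave functions on $(0,\infty)$, let $\{\widetilde t_i\}$ be a discretizing sequence for $\varphi(\varphi_0,\varphi_1)$, $\{\tau_k\}$ a discretizing sequence for $\varphi_0$ and $\{z_k\}$ a discretizing sequence for $\varphi_1$. Then there is a constant $C$ independent of $k$ such that for all $k\in\mathbb Z$ $$\sum_{i:\ \tau_k\le\widetilde t_i\le\tau_{k+1}}\varphi\Big(\frac{\varphi_1(\widetilde t_i)}{\varphi_0(\widetilde t_i)}\Big)^r\le C\sup_{i:\ \tau_k\le\widetilde t_i\le\tau_{k+1}}\varphi\Big(\frac{\varphi_1(\widetilde t_i)}{\varphi_0(\widetilde t_i)}\Big)^r,$$ $$\sum_{i:\ z_k\le\widetilde t_i\le z_{k+1}}\Big(\frac{\varphi_0(\widetilde t_i)}{\varphi_1(\widetilde t_i)}\varphi\Big(\frac{\varphi_1(\widetilde t_i)}{\varphi_0(\widetilde t_i)}\Big)\Big)^r\le C\sup_{i:\ z_k\le\widetilde t_i\le z_{k+1}}\Big(\frac{\varphi_0(\widetilde t_i)}{\varphi_1(\widetilde t_i)}\varphi\Big(\frac{\varphi_1(\widetilde t_i)}{\varphi_0(\widetilde t_i)}\Big)\Big)^r.$$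
   Context: A function $\psi:(0,\infty)\to(0,\infty)$ is non-degenerate quasi-concave if it is non-decreasing, $\psi(t)/t$ is non-increasing, and $\lim_{t\to0+}\psi(t)=\lim_{t\to\infty}\psi(t)/t=\lim_{t\to0+}t/\psi(t)=\lim_{t\to\infty}1/\psi(t)=0$. $\varphi(\varphi_0,\varphi_1)(t)=\varphi_0(t)\varphi(\varphi_1(t)/\varphi_0(t))$. A positive sequence is strongly increasing if $\inf_k a_{k+1}/a_k\ge2$, strongly decreasing if $\sup_k a_{k+1}/a_k\le1/2$. A strongly increasing $\{s_k\}_{k\in\mathbb Z}$ is a discretizing sequence for $\psi$ if $\{\psi(s_k)\}$ is strongly increasing, $\{\psi(s_k)/s_k\}$ is strongly decreasing, and $\mathbb Z=\mathbb Z_1\sqcup\mathbb Z_2$ with $\psi(s_{k+1})\le2\psi(s_k)$ for $k\in\mathbb Z_1$ and $\psi(s_k)/s_k\le2\psi(s_{k+1})/s_{k+1}$ for $k\in\mathbb Z_2$. *)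

theory Defs
  imports Complex_Main
begin

definition nd_quasi_concave :: "(real \<Rightarrow> real) \<Rightarrow> bool" where
  "nd_quasi_concave \<psi> \<longleftrightarrow>
     (\<forall>t>0. \<psi> t > 0) \<and>
     (\<forall>s t. 0 < s \<longrightarrow> s \<le> t \<longrightarrow> \<psi> s \<le> \<psi> t) \<and>
     (\<forall>s t. 0 < s \<longrightarrow> s \<le> t \<longrightarrow> \<psi> t / t \<le> \<psi> s / s) \<and>
     (\<psi> \<longlongrightarrow> 0) (at_right 0) \<and>
     ((\<lambda>t. \<psi> t / t) \<longlongrightarrow> 0) at_top \<and>
     ((\<lambda>t. t / \<psi> t) \<longlongrightarrow> 0) (at_right 0) \<and>
     ((\<lambda>t. 1 / \<psi> t) \<longlongrightarrow> 0) at_top"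

definition interp_fun :: "(real \<Rightarrow> real) \<Rightarrow> (real \<Rightarrow> real) \<Rightarrow> (real \<Rightarrow> real) \<Rightarrow> real \<Rightarrow> real" where
  "interp_fun \<phi> \<phi>0 \<phi>1 t = \<phi>0 t * \<phi> (\<phi>1 t / \<phi>0 t)"

definition strongly_increasing :: "(int \<Rightarrow> real) \<Rightarrow> bool" where
  "strongly_increasing a \<longleftrightarrow> (\<forall>k. a k > 0) \<and> (\<forall>k. 2 \<le> a (k + 1) / a k)"

definition strongly_decreasing :: "(int \<Rightarrow> real) \<Rightarrow> bool" where
  "strongly_decreasing a \<longleftrightarrow> (\<forall>k. a k > 0) \<and> (\<forall>k. a (k + 1) / a k \<le> 1 / 2)"

definition discretizing_seq :: "(int \<Rightarrow> real) \<Rightarrow> (real \<Rightarrow> real) \<Rightarrow> bool" where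
  "discretizing_seq s \<psi> \<longleftrightarrow>
     strongly_increasing s \<and>
     strongly_increasing (\<lambda>k. \<psi> (s k)) \<and>
     strongly_decreasing (\<lambda>k. \<psi> (s k) / s k) \<and>
     (\<exists>Z1 Z2. Z1 \<inter> Z2 = {} \<and> Z1 \<union> Z2 = UNIV \<and>
        (\<forall>k\<in>Z1. \<psi> (s (k + 1)) \<le> 2 * \<psi> (s k)) \<and>
        (\<forall>k\<in>Z2. \<psi> (s k) / s k \<le> 2 * (\<psi> (s (k + 1)) / s (k + 1))))"

end

theory Submission
  imports Defs
begin

text \<open>Write \<open>\<psi> = \<phi>(\<phi>0,\<phi>1)\<close>. Both summands have the form \<open>(P i / \<chi> (t i)) powr r\<close> with
  \<open>P i = \<psi> (t i)\<close>, \<open>\<chi> = \<phi>0\<close> resp. \<open>\<chi> = \<phi>1\<close>, where \<open>P\<close> is strongly increasing and \<open>P i / t i\<close>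
  strongly decreasing because \<open>t\<close> discretizes \<open>\<psi>\<close>. On a block \<open>[s k, s (k + 1)]\<close> of a
  discretizing sequence of \<open>\<chi>\<close>, either \<open>\<chi>\<close> at most doubles, and then \<open>P i / \<chi> (t i)\<close> grows
  geometrically in \<open>i\<close>, or \<open>\<chi> x / x\<close> at most halves, and then
  \<open>P i / \<chi> (t i) = (P i / t i) / (\<chi> (t i) / t i)\<close> decays geometrically. A power of a
  geometric sequence is again geometric, and a geometric sum is dominated by its largest term.\<close>

lemma strongly_increasing_doubling:
  assumes "strongly_increasing a" "i \<le> j"
  shows "2 ^ nat (j - i) * a i \<le> a j"
  using assms(2)
proof (induction j rule: int_ge_induct)
  case base
  then show ?case by simp
next
  case (step j)
  have "0 < a j" "2 \<le> a (j + 1) / a j"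
    using assms(1) unfolding strongly_increasing_def by auto
  then have "2 * a j \<le> a (j + 1)" by (simp add: field_simps)
  moreover have "nat (j + 1 - i) = Suc (nat (j - i))" using step.hyps by simp
  ultimately show ?case using step.IH by simp
qed

lemma strongly_increasing_inverse:
  assumes "strongly_decreasing a"
  shows "strongly_increasing (\<lambda>k. 1 / a k)"
  unfolding strongly_increasing_def
proof (intro conjI allI)
  fix k
  have "0 < a k" "0 < a (k + 1)" "a (k + 1) / a k \<le> 1 / 2"
    using assms unfolding strongly_decreasing_def by auto
  then show "0 < 1 / a k" "2 \<le> (1 / a (k + 1)) / (1 / a k)" by (simp_all add: field_simps)
qed

lemma strongly_decreasing_halving:
  assumes "strongly_decreasing a" "i \<le> j"
  shows "a j \<le> (1/2) ^ nat (j - i) * a i"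
proof -
  have "0 < a i" "0 < a j" using assms(1) unfolding strongly_decreasing_def by auto
  moreover have "2 ^ nat (j - i) * (1 / a i) \<le> 1 / a j"
    using strongly_increasing_doubling[OF strongly_increasing_inverse[OF assms(1)] assms(2)] .
  ultimately show ?thesis by (simp add: field_simps)
qed

lemma strongly_increasing_abs_index_le:
  assumes "strongly_increasing a" "0 < lo" "lo \<le> a i" "a i \<le> hi"
  shows "\<bar>i\<bar> \<le> max (hi / a 0) (a 0 / lo)"
proof -
  have a0: "0 < a 0" using assms(1) unfolding strongly_increasing_def by auto
  show ?thesis
  proof (cases "0 \<le> i")
    case True
    have "real (nat i) \<le> 2 ^ nat i" by (rule less_imp_le[OF of_nat_less_two_power])
    then have "real (nat i) * a 0 \<le> 2 ^ nat i * a 0" using a0 by (simp only: mult_right_mono)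
    also have "\<dots> \<le> a i" using strongly_increasing_doubling[OF assms(1) True] by simp
    finally have "real (nat i) \<le> hi / a 0" using a0 assms(4) by (simp add: field_simps)
    with True show ?thesis by simp
  next
    case False
    have "real (nat (- i)) \<le> 2 ^ nat (- i)" by (rule less_imp_le[OF of_nat_less_two_power])
    then have "real (nat (- i)) * lo \<le> 2 ^ nat (- i) * a i"
      using assms(2,3) by (intro mult_mono) auto
    also have "\<dots> \<le> a 0" using strongly_increasing_doubling[OF assms(1), of i 0] False by simp
    finally have "real (nat (- i)) \<le> a 0 / lo" using assms(2) by (simp add: field_simps)
    with False show ?thesis by simp
  qed
qed

lemma strongly_increasing_finite_preimage:
  assumes "strongly_increasing a" "0 < lo"
  shows "finite {i. lo \<le> a i \<and> a i \<le> hi}"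
proof (rule finite_subset)
  define N where "N = \<lceil>max (hi / a 0) (a 0 / lo)\<rceil>"
  show "{i. lo \<le> a i \<and> a i \<le> hi} \<subseteq> {- N..N}"
  proof
    fix i assume "i \<in> {i. lo \<le> a i \<and> a i \<le> hi}"
    then have "\<bar>i\<bar> \<le> max (hi / a 0) (a 0 / lo)"
      using strongly_increasing_abs_index_le[OF assms] by simp
    then have "\<bar>i\<bar> \<le> N" unfolding N_def by (meson le_of_int_ceiling of_int_le_iff order_trans)
    then show "i \<in> {- N..N}" by (auto simp: abs_le_iff)
  qed
qed simp

lemma sum_le_geometric:
  fixes F :: "'a \<Rightarrow> real" and d :: "'a \<Rightarrow> nat"
  assumes "finite I" "inj_on d I" "0 \<le> c" "0 \<le> q" "q < 1"
    and "\<And>i. i \<in> I \<Longrightarrow> F i \<le> c * q ^ d i"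
  shows "sum F I \<le> c / (1 - q)"
proof -
  have "sum F I \<le> (\<Sum>i\<in>I. c * q ^ d i)" using assms(6) by (rule sum_mono)
  also have "\<dots> = c * (\<Sum>n\<in>d ` I. q ^ n)"
    using assms(2) by (simp add: sum_distrib_left sum.reindex)
  also have "(\<Sum>n\<in>d ` I. q ^ n) \<le> (\<Sum>n. q ^ n)"
    using assms by (intro sum_le_suminf summable_geometric) auto
  also have "(\<Sum>n. q ^ n) = 1 / (1 - q)" using assms by (intro suminf_geometric) auto
  finally show ?thesis using assms(3) by (simp add: mult_left_mono)
qed

lemma sum_le_SUP_of_geometric_growth:
  fixes h :: "int \<Rightarrow> real"
  assumes "finite I" "I \<noteq> {}" "0 \<le> C" "0 \<le> q" "q < 1" "\<And>i. i \<in> I \<Longrightarrow> 0 \<le> h i"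
    and growth: "\<And>i j. i \<in> I \<Longrightarrow> j \<in> I \<Longrightarrow> i \<le> j \<Longrightarrow> h i \<le> C * q ^ nat (j - i) * h j"
  shows "sum h I \<le> C / (1 - q) * (SUP i\<in>I. h i)"
proof -
  define m where "m = Max I"
  have m: "m \<in> I" "\<And>i. i \<in> I \<Longrightarrow> i \<le> m" using assms(1,2) unfolding m_def by auto
  have "sum h I \<le> C * h m / (1 - q)"
  proof (rule sum_le_geometric[OF assms(1) _ _ assms(4,5)])
    show "inj_on (\<lambda>i. nat (m - i)) I" using m(2) by (intro inj_onI) (simp add: eq_nat_nat_iff)
    show "h i \<le> C * h m * q ^ nat (m - i)" if "i \<in> I" for i
      using growth[OF that m(1) m(2)[OF that]] by (simp add: mult_ac)
  qed (use assms m in simp)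
  also have "\<dots> \<le> C * (SUP i\<in>I. h i) / (1 - q)"
    using assms m by (intro divide_right_mono mult_left_mono cSUP_upper) auto
  finally show ?thesis by simp
qed

lemma sum_le_SUP_of_geometric_decay:
  fixes h :: "int \<Rightarrow> real"
  assumes "finite I" "I \<noteq> {}" "0 \<le> C" "0 \<le> q" "q < 1" "\<And>i. i \<in> I \<Longrightarrow> 0 \<le> h i"
    and decay: "\<And>i j. i \<in> I \<Longrightarrow> j \<in> I \<Longrightarrow> i \<le> j \<Longrightarrow> h j \<le> C * q ^ nat (j - i) * h i"
  shows "sum h I \<le> C / (1 - q) * (SUP i\<in>I. h i)"
proof -
  define m where "m = Min I"
  have m: "m \<in> I" "\<And>i. i \<in> I \<Longrightarrow> m \<le> i" using assms(1,2) unfolding m_def by auto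
  have "sum h I \<le> C * h m / (1 - q)"
  proof (rule sum_le_geometric[OF assms(1) _ _ assms(4,5)])
    show "inj_on (\<lambda>i. nat (i - m)) I" using m(2) by (intro inj_onI) (simp add: eq_nat_nat_iff)
    show "h i \<le> C * h m * q ^ nat (i - m)" if "i \<in> I" for i
      using decay[OF m(1) that m(2)[OF that]] by (simp add: mult_ac)
  qed (use assms m in simp)
  also have "\<dots> \<le> C * (SUP i\<in>I. h i) / (1 - q)"
    using assms m by (intro divide_right_mono mult_left_mono cSUP_upper) auto
  finally show ?thesis by simp
qed

lemma powr_le_of_doubling:
  fixes x y r :: real
  assumes "0 < r" "0 \<le> x" "x \<le> 2 * (1/2) ^ n * y"
  shows "x powr r \<le> 2 powr r * (2 powr (- r)) ^ n * y powr r"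
proof -
  have "((1/2::real) ^ n) powr r = (2 powr (- r)) ^ n"
    by (simp add: powr_realpow[symmetric] powr_powr powr_power powr_divide powr_minus_divide mult_ac)
  then have "(2 * (1/2) ^ n * y) powr r = 2 powr r * (2 powr (- r)) ^ n * y powr r"
    by (simp add: powr_mult)
  moreover have "x powr r \<le> (2 * (1/2) ^ n * y) powr r" using assms by (intro powr_mono2) auto
  ultimately show ?thesis by simp
qed

lemma inverse_powr_uminus:
  fixes x r :: real
  shows "0 < x \<Longrightarrow> (1 / x) powr (- r) = x powr r"
  by (simp add: powr_divide powr_minus_divide)

definition geometric_powr_const :: "real \<Rightarrow> real" where
  "geometric_powr_const r = 2 powr \<bar>r\<bar> / (1 - 2 powr (- \<bar>r\<bar>))"

lemma sum_powr_le_SUP_of_doubling_growth: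
  fixes g :: "int \<Rightarrow> real"
  assumes "finite I" "I \<noteq> {}" "r \<noteq> 0" "\<And>i. i \<in> I \<Longrightarrow> 0 < g i"
    and growth: "\<And>i j. i \<in> I \<Longrightarrow> j \<in> I \<Longrightarrow> i \<le> j \<Longrightarrow> g i \<le> 2 * (1/2) ^ nat (j - i) * g j"
  shows "(\<Sum>i\<in>I. g i powr r) \<le> geometric_powr_const r * (SUP i\<in>I. g i powr r)"
proof (cases "0 < r")
  case True
  have "(\<Sum>i\<in>I. g i powr r) \<le> 2 powr r / (1 - 2 powr (- r)) * (SUP i\<in>I. g i powr r)"
  proof (rule sum_le_SUP_of_geometric_growth[OF assms(1,2)])
    show "2 powr (- r) < 1" using True by (intro powr_less_one) auto
    show "g i powr r \<le> 2 powr r * (2 powr (- r)) ^ nat (j - i) * g j powr r"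
      if "i \<in> I" "j \<in> I" "i \<le> j" for i j
      using True assms(4)[OF that(1)] growth[OF that] by (intro powr_le_of_doubling) auto
  qed auto
  with True show ?thesis by (simp add: geometric_powr_const_def)
next
  case False
  \<comment> \<open>\<open>g i powr r = (1 / g i) powr s\<close> with \<open>s = - r > 0\<close>, and \<open>1 / g\<close> decays geometrically\<close>
  define s where "s = - r"
  have "0 < s" using False assms(3) unfolding s_def by simp
  have "(\<Sum>i\<in>I. (1 / g i) powr s) \<le> 2 powr s / (1 - 2 powr (- s)) * (SUP i\<in>I. (1 / g i) powr s)"
  proof (rule sum_le_SUP_of_geometric_decay[OF assms(1,2)])
    show "2 powr (- s) < 1" using \<open>0 < s\<close> by (intro powr_less_one) auto
    fix i j assume ij: "i \<in> I" "j \<in> I" "i \<le> j"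
    have "1 / g j \<le> 2 * (1/2) ^ nat (j - i) * (1 / g i)"
      using growth[OF ij] assms(4)[OF ij(1)] assms(4)[OF ij(2)] by (simp add: field_simps)
    then show "(1 / g j) powr s \<le> 2 powr s * (2 powr (- s)) ^ nat (j - i) * (1 / g i) powr s"
      using \<open>0 < s\<close> assms(4)[OF ij(2)] by (intro powr_le_of_doubling) auto
  qed auto
  with False assms(4) show ?thesis
    by (simp add: s_def geometric_powr_const_def inverse_powr_uminus)
qed

lemma sum_powr_le_SUP_of_doubling_decay:
  fixes g :: "int \<Rightarrow> real"
  assumes "finite I" "I \<noteq> {}" "r \<noteq> 0" "\<And>i. i \<in> I \<Longrightarrow> 0 < g i"
    and decay: "\<And>i j. i \<in> I \<Longrightarrow> j \<in> I \<Longrightarrow> i \<le> j \<Longrightarrow> g j \<le> 2 * (1/2) ^ nat (j - i) * g i"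
  shows "(\<Sum>i\<in>I. g i powr r) \<le> geometric_powr_const r * (SUP i\<in>I. g i powr r)"
proof -
  have "(\<Sum>i\<in>I. (1 / g i) powr (- r))
      \<le> geometric_powr_const (- r) * (SUP i\<in>I. (1 / g i) powr (- r))"
  proof (rule sum_powr_le_SUP_of_doubling_growth[OF assms(1,2)])
    show "1 / g i \<le> 2 * (1/2) ^ nat (j - i) * (1 / g j)" if "i \<in> I" "j \<in> I" "i \<le> j" for i j
      using decay[OF that] assms(4) that by (simp add: field_simps)
  qed (use assms in auto)
  with assms(4) show ?thesis by (simp add: geometric_powr_const_def inverse_powr_uminus)
qed

definition quasi_concave :: "(real \<Rightarrow> real) \<Rightarrow> bool" where
  "quasi_concave \<psi> \<longleftrightarrow>
     (\<forall>t>0. \<psi> t > 0) \<and>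
     (\<forall>s t. 0 < s \<longrightarrow> s \<le> t \<longrightarrow> \<psi> s \<le> \<psi> t) \<and>
     (\<forall>s t. 0 < s \<longrightarrow> s \<le> t \<longrightarrow> \<psi> t / t \<le> \<psi> s / s)"

lemma nd_quasi_concave_imp_quasi_concave: "nd_quasi_concave \<psi> \<Longrightarrow> quasi_concave \<psi>"
  unfolding nd_quasi_concave_def quasi_concave_def by blast

lemma discretizing_seq_dichotomy:
  assumes "discretizing_seq s \<psi>"
  shows "\<psi> (s (k + 1)) \<le> 2 * \<psi> (s k) \<or> \<psi> (s k) / s k \<le> 2 * (\<psi> (s (k + 1)) / s (k + 1))"
  using assms unfolding discretizing_seq_def by blast

lemma block_sum_powr_le_SUP:
  fixes t P :: "int \<Rightarrow> real" and \<chi> :: "real \<Rightarrow> real"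
  assumes \<chi>: "quasi_concave \<chi>" and "0 < a"
    and dichotomy: "\<chi> b \<le> 2 * \<chi> a \<or> \<chi> a / a \<le> 2 * (\<chi> b / b)"
    and t: "strongly_increasing t" and P: "strongly_increasing P"
    and P_div_t: "strongly_decreasing (\<lambda>i. P i / t i)"
    and "r \<noteq> 0"
  defines I_def: "I \<equiv> {i. a \<le> t i \<and> t i \<le> b}"
  assumes "I \<noteq> {}"
  shows "(\<Sum>i\<in>I. (P i / \<chi> (t i)) powr r)
    \<le> geometric_powr_const r * (SUP i\<in>I. (P i / \<chi> (t i)) powr r)"
proof -
  have \<chi>_pos: "\<And>x. 0 < x \<Longrightarrow> 0 < \<chi> x"
    and \<chi>_mono: "\<And>x y. 0 < x \<Longrightarrow> x \<le> y \<Longrightarrow> \<chi> x \<le> \<chi> y"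
    and \<chi>_ratio_antimono: "\<And>x y. 0 < x \<Longrightarrow> x \<le> y \<Longrightarrow> \<chi> y / y \<le> \<chi> x / x"
    using \<chi> unfolding quasi_concave_def by auto
  have t_pos: "\<And>i. 0 < t i" and P_pos: "\<And>i. 0 < P i"
    using t P unfolding strongly_increasing_def by auto
  have I: "a \<le> t i" "t i \<le> b" if "i \<in> I" for i using that unfolding I_def by auto
  have "finite I" unfolding I_def using t \<open>0 < a\<close> by (rule strongly_increasing_finite_preimage)
  from dichotomy show ?thesis
  proof
    assume \<chi>_doubling: "\<chi> b \<le> 2 * \<chi> a"
    show ?thesis
    proof (rule sum_powr_le_SUP_of_doubling_growth[OF \<open>finite I\<close> \<open>I \<noteq> {}\<close> \<open>r \<noteq> 0\<close>])
      fix i j assume ij: "i \<in> I" "j \<in> I" "i \<le> j"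
      have "\<chi> (t j) \<le> \<chi> b" using I[OF ij(2)] t_pos by (intro \<chi>_mono) auto
      also have "\<dots> \<le> 2 * \<chi> a" by (fact \<chi>_doubling)
      also have "\<dots> \<le> 2 * \<chi> (t i)" using I[OF ij(1)] \<open>0 < a\<close> by (simp add: \<chi>_mono)
      finally have \<chi>_ij: "\<chi> (t j) / 2 \<le> \<chi> (t i)" by simp
      have P_ij: "P i \<le> (1/2) ^ nat (j - i) * P j"
        using strongly_increasing_doubling[OF P ij(3)] by (simp add: field_simps)
      have "P i / \<chi> (t i) \<le> ((1/2) ^ nat (j - i) * P j) / (\<chi> (t j) / 2)"
        by (rule frac_le) (use \<chi>_ij P_ij P_pos \<chi>_pos t_pos in \<open>auto intro: less_imp_le\<close>)
      then show "P i / \<chi> (t i) \<le> 2 * (1/2) ^ nat (j - i) * (P j / \<chi> (t j))"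
        by (simp add: mult_ac)
    qed (use P_pos \<chi>_pos t_pos in auto)
  next
    assume \<chi>_ratio_doubling: "\<chi> a / a \<le> 2 * (\<chi> b / b)"
    show ?thesis
    proof (rule sum_powr_le_SUP_of_doubling_decay[OF \<open>finite I\<close> \<open>I \<noteq> {}\<close> \<open>r \<noteq> 0\<close>])
      fix i j assume ij: "i \<in> I" "j \<in> I" "i \<le> j"
      have "\<chi> (t i) / t i \<le> \<chi> a / a" using I[OF ij(1)] \<open>0 < a\<close> by (intro \<chi>_ratio_antimono) auto
      also have "\<dots> \<le> 2 * (\<chi> b / b)" by (fact \<chi>_ratio_doubling)
      also have "\<dots> \<le> 2 * (\<chi> (t j) / t j)"
        using I[OF ij(2)] t_pos by (intro mult_left_mono \<chi>_ratio_antimono) auto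
      finally have \<chi>_ij: "(\<chi> (t i) / t i) / 2 \<le> \<chi> (t j) / t j" by simp
      have P_ij: "P j / t j \<le> (1/2) ^ nat (j - i) * (P i / t i)"
        using strongly_decreasing_halving[OF P_div_t ij(3)] .
      have "(P j / t j) / (\<chi> (t j) / t j)
          \<le> ((1/2) ^ nat (j - i) * (P i / t i)) / ((\<chi> (t i) / t i) / 2)"
        by (rule frac_le) (use \<chi>_ij P_ij P_pos \<chi>_pos t_pos in \<open>auto intro: less_imp_le\<close>)
      then show "P j / \<chi> (t j) \<le> 2 * (1/2) ^ nat (j - i) * (P i / \<chi> (t i))"
        using t_pos[of i] t_pos[of j] by (simp add: mult_ac)
    qed (use P_pos \<chi>_pos t_pos in auto)
  qed
qed

theorem lemma3p8:
  fixes r :: real and \<phi> \<phi>0 \<phi>1 :: "real \<Rightarrow> real" and tt \<tau> z :: "int \<Rightarrow> real"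
  assumes "r \<noteq> 0"
    and "nd_quasi_concave \<phi>0" and "nd_quasi_concave \<phi>1" and "nd_quasi_concave \<phi>"
    and "discretizing_seq tt (interp_fun \<phi> \<phi>0 \<phi>1)"
    and "discretizing_seq \<tau> \<phi>0"
    and "discretizing_seq z \<phi>1"
  shows "\<exists>C. \<forall>k::int.
     (let I = {i. \<tau> k \<le> tt i \<and> tt i \<le> \<tau> (k + 1)};
          f = (\<lambda>i. \<phi> (\<phi>1 (tt i) / \<phi>0 (tt i)) powr r)
      in finite I \<and> (I \<noteq> {} \<longrightarrow> (\<Sum>i\<in>I. f i) \<le> C * (SUP i\<in>I. f i))) \<and>
     (let J = {i. z k \<le> tt i \<and> tt i \<le> z (k + 1)};
          g = (\<lambda>i. (\<phi>0 (tt i) / \<phi>1 (tt i) * \<phi> (\<phi>1 (tt i) / \<phi>0 (tt i))) powr r)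
      in finite J \<and> (J \<noteq> {} \<longrightarrow> (\<Sum>i\<in>J. g i) \<le> C * (SUP i\<in>J. g i)))"
proof -
  let ?\<psi> = "interp_fun \<phi> \<phi>0 \<phi>1"
  have tt: "strongly_increasing tt" "strongly_increasing (\<lambda>i. ?\<psi> (tt i))"
    "strongly_decreasing (\<lambda>i. ?\<psi> (tt i) / tt i)"
    using assms(5) unfolding discretizing_seq_def by auto
  have block: "finite I \<and> (I \<noteq> {} \<longrightarrow>
      (\<Sum>i\<in>I. (?\<psi> (tt i) / \<chi> (tt i)) powr r)
        \<le> geometric_powr_const r * (SUP i\<in>I. (?\<psi> (tt i) / \<chi> (tt i)) powr r))"
    if "nd_quasi_concave \<chi>" "discretizing_seq s \<chi>" "I = {i. s k \<le> tt i \<and> tt i \<le> s (k + 1)}"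
    for \<chi> s k I
  proof -
    have "0 < s k" using that(2) unfolding discretizing_seq_def strongly_increasing_def by auto
    then show ?thesis
      using strongly_increasing_finite_preimage[OF tt(1)] discretizing_seq_dichotomy[OF that(2)]
        block_sum_powr_le_SUP[OF nd_quasi_concave_imp_quasi_concave[OF that(1)] _ _ tt assms(1)] that(3)
      by blast
  qed
  have \<phi>0_pos: "0 < \<phi>0 (tt i)" for i
    using assms(2) tt(1) unfolding nd_quasi_concave_def strongly_increasing_def by auto
  have f_eq: "\<phi> (\<phi>1 (tt i) / \<phi>0 (tt i)) = ?\<psi> (tt i) / \<phi>0 (tt i)"
    and g_eq: "\<phi>0 (tt i) / \<phi>1 (tt i) * \<phi> (\<phi>1 (tt i) / \<phi>0 (tt i)) = ?\<psi> (tt i) / \<phi>1 (tt i)" for i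
    using \<phi>0_pos[of i] by (simp_all add: interp_fun_def)
  show ?thesis
    unfolding Let_def g_eq unfolding f_eq
    using block[OF assms(2,6) refl] block[OF assms(3,7) refl]
    by (intro exI[of _ "geometric_powr_const r"] allI conjI) simp_all
qed

end
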